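(* Let $(a_k)_{k\ge 0}$ be a sequence of positive reals such that $a_{k+1}/a_k$ is strictly decreasing in $k$ and tends to $0$. Let $F(t)=\sum_{k\ge0}a_kt^k$ (an entire function) and consider the power series family of distributions $f(k;t)=a_kt^k/F(t)$, $k\ge 0$, with parameter $t\ge 0$. Let $\mu(t)=\sum_k k f(k;t)$ be the mean, $t_0:=0$ and $t_k:=a_{k-1}/a_k$ for $k\ge1$; let $m_+(t)$ be the leading mode of $f(\cdot;t)$, and for $k\ge0$ let $\ell(k)$ be the unique solution $t\ge0$ of $\mu(t)=k$. Then the family is cross modal if and only if, for every $t\ge 0$ such that $\mu(t)$ is an integer, $\mu(t)$ is a mode of $f(\cdot;t)$. Moreover this condition is equivalent to each of the following: (i) $t_k\le \ell(k)\le t_{k+1}$ for all $k\ge1$; (ii) $k-1\le \mu(t_k)\le k$ for all $k\ge1$; (iii) $\sup_{t\ge0}|\mu(t)-m_+(t)|\le 1$.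
   Context: A mode of a probability function $g$ on $\{0,1,2,\dots\}$ is any $k$ with $g(k)=\max_j g(j)$. The leading mode $m_+$ of a log-concave probability function $g$ (extended by $g(-1)=0$) is the unique integer $k$ with $g(k-1)\le g(k)>g(k+1)$. The mean $\mu(t)$ is continuous and strictly increasing from $\mu(0)=0$ to $\infty$, so $\ell(k)$ is well defined. The family $\{f(\cdot;t):t\ge0\}$ is called cross modal if for every $k\ge0$ the likelihood $t\mapsto f(k;t)$ attains its maximum on $[0,\infty)$ and for every maximiser $t_0$ of it, $k$ is a mode of $f(\cdot;t_0)$. *)

theory Defs
  imports "HOL-Analysis.Analysis"
begin

definition psF :: "(nat \<Rightarrow> real) \<Rightarrow> real \<Rightarrow> real" where
  "psF a t = (\<Sum>k. a k * t ^ k)"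

definition psf :: "(nat \<Rightarrow> real) \<Rightarrow> nat \<Rightarrow> real \<Rightarrow> real" where
  "psf a k t = a k * t ^ k / psF a t"

definition psmean :: "(nat \<Rightarrow> real) \<Rightarrow> real \<Rightarrow> real" where
  "psmean a t = (\<Sum>k. real k * psf a k t)"

definition tpt :: "(nat \<Rightarrow> real) \<Rightarrow> nat \<Rightarrow> real" where
  "tpt a k = (if k = 0 then 0 else a (k - 1) / a k)"

definition is_mode :: "(nat \<Rightarrow> real) \<Rightarrow> nat \<Rightarrow> bool" where
  "is_mode g k \<longleftrightarrow> (\<forall>j. g j \<le> g k)"

definition leading_mode :: "(nat \<Rightarrow> real) \<Rightarrow> nat" where
  "leading_mode g = (THE k. (if k = 0 then 0 else g (k - 1)) \<le> g k \<and> g k > g (k + 1))"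

definition ell :: "(nat \<Rightarrow> real) \<Rightarrow> nat \<Rightarrow> real" where
  "ell a k = (THE t. t \<ge> 0 \<and> psmean a t = real k)"

definition cross_modal :: "(nat \<Rightarrow> real) \<Rightarrow> bool" where
  "cross_modal a \<longleftrightarrow>
     (\<forall>k. (\<exists>t0\<ge>0. \<forall>t\<ge>0. psf a k t \<le> psf a k t0) \<and>
          (\<forall>t0\<ge>0. (\<forall>t\<ge>0. psf a k t \<le> psf a k t0) \<longrightarrow> is_mode (\<lambda>j. psf a j t0) k))"

end

theory Submission
  imports Defs
begin

text \<open>
  The mean \<mu> is strictly increasing, because t \<mu>'(t) is the variance of f(\<cdot>;t), which is
  positive for t > 0; hence \<ell> is well defined. The logarithmic derivative of the likelihood
  is (k - \<mu>(t))/t, so t \<mapsto> f(k;t) increases up to \<ell>(k) and decreases after it: cross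
  modality, like the condition on integral means, says exactly that k is a mode of f(\<cdot>;\<ell>(k))
  for every k. As f(j+1;t)/f(j;t) = t/t_{j+1} with (t_j) strictly increasing, k is a mode of
  f(\<cdot>;t) iff t_k \<le> t \<le> t_{k+1}, and the leading mode is the m with t_m \<le> t < t_{m+1}. Through
  the monotonicity of \<mu>, conditions (i)-(iii) are translations of this.
\<close>

lemma powser_index_sums:
  fixes c :: "nat \<Rightarrow> real"
  assumes "\<And>y. summable (\<lambda>n. c n * y ^ n)"
  shows "(\<lambda>n. real n * c n * x ^ n) sums (x * (\<Sum>n. diffs c n * x ^ n))"
proof -
  have "(\<lambda>n. x * (diffs c n * x ^ n)) sums (x * (\<Sum>n. diffs c n * x ^ n))"
    by (intro sums_mult summable_sums termdiff_converges_all assms)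
  also have "(\<lambda>n. x * (diffs c n * x ^ n)) = (\<lambda>n. real (Suc n) * c (Suc n) * x ^ Suc n)"
    by (auto simp: diffs_def)
  finally show ?thesis
    by (subst (asm) sums_Suc_iff) simp
qed

lemma powser_has_real_derivative_index:
  fixes c :: "nat \<Rightarrow> real"
  assumes "\<And>y. summable (\<lambda>n. c n * y ^ n)" and "x \<noteq> 0"
  shows "((\<lambda>y. \<Sum>n. c n * y ^ n) has_real_derivative (\<Sum>n. real n * c n * x ^ n) / x) (at x)"
  using termdiffs_strong_converges_everywhere[OF assms(1)] assms(2)
  by (simp add: sums_unique[OF powser_index_sums[OF assms(1)], symmetric])

lemma is_mode_if_unimodal:
  fixes g :: "nat \<Rightarrow> real"
  assumes "\<And>j. j < k \<Longrightarrow> g j \<le> g (Suc j)" and "\<And>j. k \<le> j \<Longrightarrow> g (Suc j) \<le> g j"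
  shows "is_mode g k"
  unfolding is_mode_def
proof
  fix j
  show "g j \<le> g k"
  proof (cases "j \<le> k")
    case True
    then show ?thesis
      by (induction rule: dec_induct) (auto intro: order.trans assms(1))
  next
    case False
    then have "k \<le> j" by simp
    then show ?thesis
      by (induction rule: dec_induct) (auto intro: order.trans assms(2))
  qed
qed

lemma summable_powser_if_ratio_tendsto_0:
  fixes c :: "nat \<Rightarrow> real"
  assumes pos: "\<And>n. c n > 0" and lim: "(\<lambda>n. c (Suc n) / c n) \<longlonglongrightarrow> 0"
  shows "summable (\<lambda>n. c n * x ^ n)"
proof -
  have "(\<lambda>n. c (Suc n) / c n * \<bar>x\<bar>) \<longlonglongrightarrow> 0 * \<bar>x\<bar>"
    by (intro tendsto_mult lim tendsto_const)
  hence "eventually (\<lambda>n. c (Suc n) / c n * \<bar>x\<bar> < 1 / 2) sequentially"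
    by (intro order_tendstoD(2)) auto
  then obtain N where N: "\<And>n. n \<ge> N \<Longrightarrow> c (Suc n) / c n * \<bar>x\<bar> < 1 / 2"
    by (auto simp: eventually_sequentially)
  show ?thesis
  proof (rule summable_ratio_test[of "1 / 2" N])
    fix n assume "n \<ge> N"
    have "norm (c (Suc n) * x ^ Suc n) = (c (Suc n) / c n * \<bar>x\<bar>) * norm (c n * x ^ n)"
      using pos[of n] pos[of "Suc n"] by (simp add: abs_mult power_abs)
    also have "\<dots> \<le> 1 / 2 * norm (c n * x ^ n)"
      using N[OF \<open>n \<ge> N\<close>] by (intro mult_right_mono) auto
    finally show "norm (c (Suc n) * x ^ Suc n) \<le> 1 / 2 * norm (c n * x ^ n)" .
  qed simp
qed

locale power_series_family =
  fixes a :: "nat \<Rightarrow> real"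
  assumes pos: "\<And>k. a k > 0"
    and summable_powser: "\<And>x. summable (\<lambda>k. a k * x ^ k)"
begin

definition psmoment :: "nat \<Rightarrow> real \<Rightarrow> real" where
  "psmoment j t = (\<Sum>k. real k ^ j * a k * t ^ k)"

lemma summable_psmoment: "summable (\<lambda>k. real k ^ j * a k * t ^ k)"
proof (induction j arbitrary: t)
  case 0
  show ?case using summable_powser by simp
next
  case (Suc j)
  from sums_summable[OF powser_index_sums[of "\<lambda>k. real k ^ j * a k", OF Suc.IH]]
  show ?case by (simp add: mult.assoc)
qed

lemma psmoment_has_real_derivative:
  "t \<noteq> 0 \<Longrightarrow> (psmoment j has_real_derivative psmoment (j + 1) t / t) (at t)"
  using powser_has_real_derivative_index[of "\<lambda>k. real k ^ j * a k", OF summable_psmoment]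
  by (simp add: psmoment_def[abs_def] mult.assoc)

lemma isCont_psmoment: "isCont (psmoment j) t"
  using isCont_powser_converges_everywhere[of "\<lambda>k. real k ^ j * a k", OF summable_psmoment]
  by (simp add: psmoment_def[abs_def])

lemma psF_eq_psmoment: "psF a = psmoment 0"
  by (simp add: psF_def[abs_def] psmoment_def[abs_def])

lemma psmoment_pos: "t \<ge> 0 \<Longrightarrow> psmoment 0 t > 0"
  unfolding psmoment_def
  by (rule suminf_pos2[where i = 0, OF summable_psmoment]) (auto simp: pos less_imp_le[OF pos])

lemma psF_pos: "t \<ge> 0 \<Longrightarrow> psF a t > 0"
  using psmoment_pos by (simp add: psF_eq_psmoment)

lemma psf_pos: "t > 0 \<Longrightarrow> psf a k t > 0"
  using psF_pos[of t] pos[of k] by (simp add: psf_def)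

lemma psf_nonneg: "t \<ge> 0 \<Longrightarrow> psf a k t \<ge> 0"
  using psF_pos[of t] pos[of k] by (simp add: psf_def)

lemma psmean_eq: "psmean a t = psmoment 1 t / psmoment 0 t"
proof -
  have "psmean a t = (\<Sum>k. real k ^ 1 * a k * t ^ k / psmoment 0 t)"
    by (simp add: psmean_def psf_def psF_eq_psmoment mult.assoc)
  also have "\<dots> = psmoment 1 t / psmoment 0 t"
    unfolding psmoment_def[of 1] by (rule suminf_divide[OF summable_psmoment])
  finally show ?thesis .
qed

lemma psmean_0: "psmean a 0 = 0"
  using powser_zero[of "\<lambda>k. real k ^ 1 * a k"] by (simp add: psmean_eq psmoment_def)

lemma psmean_nonneg: "t \<ge> 0 \<Longrightarrow> psmean a t \<ge> 0"
  unfolding psmean_eq psmoment_def[of 1] using psmoment_pos[of t]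
  by (intro divide_nonneg_pos suminf_nonneg summable_psmoment) (auto simp: less_imp_le[OF pos])

lemma psmoment_sq_less:
  assumes "t > 0"
  shows "psmoment 1 t ^ 2 < psmoment 2 t * psmoment 0 t"
proof -
  define m where "m = psmoment 1 t / psmoment 0 t"
  have M0: "psmoment 0 t > 0" using psmoment_pos assms by simp
  have "(\<lambda>k. real k ^ 2 * a k * t ^ k - 2 * m * (real k ^ 1 * a k * t ^ k) + m\<^sup>2 * (real k ^ 0 * a k * t ^ k))
      sums (psmoment 2 t - 2 * m * psmoment 1 t + m\<^sup>2 * psmoment 0 t)"
    unfolding psmoment_def by (intro sums_add sums_diff sums_mult summable_sums summable_psmoment)
  also have "psmoment 2 t - 2 * m * psmoment 1 t + m\<^sup>2 * psmoment 0 t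
      = psmoment 2 t - psmoment 1 t ^ 2 / psmoment 0 t"
    using M0 by (simp add: m_def field_simps power2_eq_square)
  also have "(\<lambda>k. real k ^ 2 * a k * t ^ k - 2 * m * (real k ^ 1 * a k * t ^ k) + m\<^sup>2 * (real k ^ 0 * a k * t ^ k))
      = (\<lambda>k. (real k - m)\<^sup>2 * a k * t ^ k)"
    by (simp add: power2_eq_square algebra_simps)
  finally have sums: "(\<lambda>k. (real k - m)\<^sup>2 * a k * t ^ k) sums (psmoment 2 t - psmoment 1 t ^ 2 / psmoment 0 t)" .
  \<comment> \<open>the term at k = 0 or at k = 1 is positive, as m cannot be both 0 and 1\<close>
  have "0 < (\<Sum>k. (real k - m)\<^sup>2 * a k * t ^ k)"
    using assms pos
    by (intro suminf_pos2[OF sums_summable[OF sums], where i = "if m = 0 then 1 else 0"])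
      (auto intro!: mult_nonneg_nonneg simp: less_imp_le[OF pos])
  also have "\<dots> = psmoment 2 t - psmoment 1 t ^ 2 / psmoment 0 t"
    by (rule sums_unique[OF sums, symmetric])
  finally show ?thesis
    using M0 by (simp add: field_simps)
qed

lemma psmean_has_real_derivative:
  assumes "t > 0"
  shows "(psmean a has_real_derivative
           (psmoment 2 t * psmoment 0 t - psmoment 1 t ^ 2) / (t * psmoment 0 t ^ 2)) (at t)"
proof -
  have M0: "psmoment 0 t \<noteq> 0" using psmoment_pos[of t] assms by simp
  have "((\<lambda>t. psmoment 1 t / psmoment 0 t) has_real_derivative
      (psmoment 2 t / t * psmoment 0 t - psmoment 1 t * (psmoment 1 t / t)) / (psmoment 0 t * psmoment 0 t)) (at t)"
    using assms M0 psmoment_has_real_derivative[of t 0] psmoment_has_real_derivative[of t 1]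
    by (intro DERIV_divide) (auto simp: numeral_2_eq_2)
  also have "(\<lambda>t. psmoment 1 t / psmoment 0 t) = psmean a"
    by (simp add: psmean_eq[abs_def])
  finally show ?thesis
    using assms M0 by (simp add: field_simps power2_eq_square)
qed

lemma isCont_psmean: "t \<ge> 0 \<Longrightarrow> isCont (psmean a) t"
  unfolding psmean_eq[abs_def] using psmoment_pos[of t] by (intro isCont_divide isCont_psmoment) auto

lemma psmean_strict_mono: "strict_mono_on {0..} (psmean a)"
proof (rule strict_mono_onI)
  fix s t :: real
  assume "s \<in> {0..}" "s < t"
  show "psmean a s < psmean a t"
  proof (rule DERIV_pos_imp_increasing_open[OF \<open>s < t\<close>])
    fix x assume "s < x" "x < t"
    with \<open>s \<in> {0..}\<close> have "x > 0" by simp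
    with psmoment_sq_less[of x] psmoment_pos[of x] psmean_has_real_derivative[of x]
    show "\<exists>D. (psmean a has_real_derivative D) (at x) \<and> D > 0"
      by (intro exI[of _ "(psmoment 2 x * psmoment 0 x - psmoment 1 x ^ 2) / (x * psmoment 0 x ^ 2)"]) auto
  next
    show "continuous_on {s..t} (psmean a)"
      using \<open>s \<in> {0..}\<close> by (intro continuous_at_imp_continuous_on ballI isCont_psmean) auto
  qed
qed

lemma psmean_unbounded: "\<exists>t\<ge>0. real k \<le> psmean a t"
proof -
  define A where "A = (\<Sum>n<k. a n)"
  define t where "t = max 1 (real k * A / a (Suc k))"
  define s where "s n = (real n - real k) * a n * t ^ n" for n
  have t: "t \<ge> 1" by (simp add: t_def)
  have kA: "real k * A \<le> a (Suc k) * t"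
    using pos[of "Suc k"] pos_divide_le_eq[of "a (Suc k)" "real k * A" t]
    by (simp add: t_def mult.commute)
  have "(\<lambda>n. real n ^ 1 * a n * t ^ n - real k * (real n ^ 0 * a n * t ^ n))
      sums (psmoment 1 t - real k * psmoment 0 t)"
    unfolding psmoment_def by (intro sums_diff sums_mult summable_sums summable_psmoment)
  hence sums: "s sums (psmoment 1 t - real k * psmoment 0 t)"
    by (simp add: s_def[abs_def] algebra_simps)
  \<comment> \<open>only the terms below k are negative, and the term at k + 1 outweighs them\<close>
  have "- (real k * A * t ^ k) \<le> (\<Sum>n<k. s n)"
  proof -
    have "- (real k * a n * t ^ k) \<le> s n" if "n < k" for n
    proof -
      have "- real k * (a n * t ^ k) \<le> - real k * (a n * t ^ n)"
        using that t pos[of n] by (intro mult_left_mono_neg mult_left_mono power_increasing) auto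
      also have "\<dots> \<le> (real n - real k) * (a n * t ^ n)"
        using t pos[of n] by (intro mult_right_mono) auto
      finally show ?thesis by (simp add: s_def mult.assoc)
    qed
    hence "(\<Sum>n<k. - (real k * a n * t ^ k)) \<le> (\<Sum>n<k. s n)" by (intro sum_mono) auto
    thus ?thesis by (simp add: A_def sum_distrib_left sum_distrib_right sum_negf)
  qed
  moreover have "real k * A * t ^ k \<le> s (Suc k)"
    using mult_right_mono[OF kA, of "t ^ k"] t by (simp add: s_def mult.assoc mult.left_commute)
  moreover have "(\<Sum>n<Suc (Suc k). s n) \<le> suminf s"
    using t pos by (intro sum_le_suminf sums_summable[OF sums]) (auto simp: s_def less_imp_le)
  moreover have "(\<Sum>n<Suc (Suc k). s n) = (\<Sum>n<k. s n) + s (Suc k)"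
    by (simp add: s_def)
  ultimately have "0 \<le> psmoment 1 t - real k * psmoment 0 t"
    using sums_unique[OF sums] by linarith
  hence "real k \<le> psmean a t"
    using psmoment_pos[of t] t by (simp add: psmean_eq field_simps)
  with t show ?thesis by (intro exI[of _ t]) simp
qed

lemma ex1_psmean_eq: "\<exists>!t. t \<ge> 0 \<and> psmean a t = real k"
proof (rule ex_ex1I)
  obtain T where T: "T \<ge> 0" "real k \<le> psmean a T" using psmean_unbounded by blast
  have "\<forall>x. 0 \<le> x \<and> x \<le> T \<longrightarrow> isCont (psmean a) x" using isCont_psmean by simp
  with T psmean_0 show "\<exists>t. t \<ge> 0 \<and> psmean a t = real k"
    using IVT[of "psmean a" 0 "real k" T] by force
next
  show "s = t" if "s \<ge> 0 \<and> psmean a s = real k" "t \<ge> 0 \<and> psmean a t = real k" for s t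
    using that strict_mono_on_eqD[OF psmean_strict_mono] by auto
qed

lemma ell_nonneg: "ell a k \<ge> 0"
  and psmean_ell: "psmean a (ell a k) = real k"
  using theI'[OF ex1_psmean_eq[of k]] by (simp_all add: ell_def)

lemma ell_unique: "t \<ge> 0 \<Longrightarrow> psmean a t = real k \<Longrightarrow> ell a k = t"
  unfolding ell_def by (rule the1_equality[OF ex1_psmean_eq]) simp

lemma psmean_le_psmean_iff: "s \<ge> 0 \<Longrightarrow> t \<ge> 0 \<Longrightarrow> psmean a s \<le> psmean a t \<longleftrightarrow> s \<le> t"
  using strict_mono_on_less_eq[OF psmean_strict_mono] by simp

lemma psmean_le_iff_le_ell: "t \<ge> 0 \<Longrightarrow> psmean a t \<le> real k \<longleftrightarrow> t \<le> ell a k"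
  using psmean_le_psmean_iff[of t "ell a k"] ell_nonneg psmean_ell by simp

lemma ell_le_iff_le_psmean: "t \<ge> 0 \<Longrightarrow> ell a k \<le> t \<longleftrightarrow> real k \<le> psmean a t"
  using psmean_le_psmean_iff[of "ell a k" t] ell_nonneg psmean_ell by simp

lemma psf_has_real_derivative:
  assumes "t > 0"
  shows "(psf a k has_real_derivative psf a k t * (real k - psmean a t) / t) (at t)"
proof -
  have M0: "psmoment 0 t > 0" using psmoment_pos[of t] assms by simp
  have "((\<lambda>t. a k * t ^ k / psmoment 0 t) has_real_derivative
      (a k * (real k * t ^ (k - 1)) * psmoment 0 t - a k * t ^ k * (psmoment 1 t / t))
        / (psmoment 0 t * psmoment 0 t)) (at t)"
    using assms M0 psmoment_has_real_derivative[of t 0]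
    by (intro DERIV_divide DERIV_cmult DERIV_pow) auto
  also have "(\<lambda>t. a k * t ^ k / psmoment 0 t) = psf a k"
    by (simp add: psf_def[abs_def] psF_eq_psmoment)
  also have "(a k * (real k * t ^ (k - 1)) * psmoment 0 t - a k * t ^ k * (psmoment 1 t / t))
        / (psmoment 0 t * psmoment 0 t) = psf a k t * (real k - psmean a t) / t"
    using assms M0 by (cases k) (simp_all add: psf_def psF_eq_psmoment psmean_eq field_simps)
  finally show ?thesis .
qed

lemma continuous_on_psf: "continuous_on {0..} (psf a k)"
  unfolding psf_def[abs_def] psF_eq_psmoment using psmoment_pos
  by (intro continuous_at_imp_continuous_on ballI isCont_divide isCont_psmoment continuous_intros) force+

lemma psf_strict_mono_below_ell:
  assumes "0 \<le> s" "s < t" "t \<le> ell a k"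
  shows "psf a k s < psf a k t"
proof (rule DERIV_pos_imp_increasing_open[OF \<open>s < t\<close>])
  fix x assume "s < x" "x < t"
  with assms have "x > 0" "psmean a x < real k"
    using psmean_le_iff_le_ell[of x k] ell_le_iff_le_psmean[of x k] by auto
  with psf_has_real_derivative[of x k] psf_pos[of x k]
  show "\<exists>D. (psf a k has_real_derivative D) (at x) \<and> D > 0"
    by (intro exI[of _ "psf a k x * (real k - psmean a x) / x"]) auto
qed (use assms in \<open>auto intro: continuous_on_subset[OF continuous_on_psf]\<close>)

lemma psf_strict_antimono_above_ell:
  assumes "ell a k \<le> s" "s < t"
  shows "psf a k t < psf a k s"
proof (rule DERIV_neg_imp_decreasing_open[OF \<open>s < t\<close>])
  fix x assume "s < x" "x < t"
  with assms ell_nonneg[of k] have "x > 0" "psmean a x > real k"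
    using psmean_le_iff_le_ell[of x k] by auto
  with psf_has_real_derivative[of x k] psf_pos[of x k]
  show "\<exists>D. (psf a k has_real_derivative D) (at x) \<and> D < 0"
    by (intro exI[of _ "psf a k x * (real k - psmean a x) / x"]) (auto simp: divide_less_0_iff mult_less_0_iff)
qed (use assms ell_nonneg[of k] in \<open>auto intro: continuous_on_subset[OF continuous_on_psf]\<close>)

lemma psf_maximal_iff_ell:
  assumes "t0 \<ge> 0"
  shows "(\<forall>t\<ge>0. psf a k t \<le> psf a k t0) \<longleftrightarrow> t0 = ell a k"
proof
  assume "\<forall>t\<ge>0. psf a k t \<le> psf a k t0"
  then show "t0 = ell a k"
    using psf_strict_mono_below_ell[OF assms, of "ell a k" k] psf_strict_antimono_above_ell[of k "ell a k" t0]
      ell_nonneg[of k] by (cases "t0 < ell a k") force+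
next
  assume "t0 = ell a k"
  then show "\<forall>t\<ge>0. psf a k t \<le> psf a k t0"
    using psf_strict_mono_below_ell[of _ t0 k] psf_strict_antimono_above_ell[of k t0]
    by (metis linorder_not_le order_le_less order_refl)
qed

lemma cross_modal_iff_mode_at_ell: "cross_modal a \<longleftrightarrow> (\<forall>k. is_mode (\<lambda>j. psf a j (ell a k)) k)"
  using ell_nonneg by (simp add: cross_modal_def psf_maximal_iff_ell cong: conj_cong)

lemma integer_mean_is_mode_iff_mode_at_ell:
  "(\<forall>t\<ge>0. \<forall>k::nat. psmean a t = real k \<longrightarrow> is_mode (\<lambda>j. psf a j t) k)
     \<longleftrightarrow> (\<forall>k. is_mode (\<lambda>j. psf a j (ell a k)) k)"
  using ell_nonneg psmean_ell ell_unique by metis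

end

locale ratio_decreasing_family =
  fixes a :: "nat \<Rightarrow> real"
  assumes pos: "\<And>k. a k > 0"
    and ratio_dec: "\<And>k. a (Suc (Suc k)) / a (Suc k) < a (Suc k) / a k"
    and ratio_lim: "(\<lambda>k. a (Suc k) / a k) \<longlonglongrightarrow> 0"

sublocale ratio_decreasing_family \<subseteq> power_series_family
  using pos summable_powser_if_ratio_tendsto_0[OF pos ratio_lim] by unfold_locales

context ratio_decreasing_family
begin

lemma tpt_Suc: "tpt a (Suc k) = a k / a (Suc k)"
  by (simp add: tpt_def)

lemma strict_mono_tpt: "strict_mono (tpt a)"
proof (rule strict_mono_Suc_iff[THEN iffD2], intro allI)
  fix n
  show "tpt a n < tpt a (Suc n)"
  proof (cases n)
    case 0
    then show ?thesis using pos[of 0] pos[of 1] by (simp add: tpt_def)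
  next
    case (Suc m)
    have "a (Suc (Suc m)) * a m < a (Suc m) * a (Suc m)"
      using ratio_dec[of m] pos[of m] pos[of "Suc m"] by (simp add: field_simps)
    then show ?thesis
      using Suc pos[of "Suc m"] pos[of "Suc (Suc m)"] by (simp add: tpt_Suc field_simps)
  qed
qed

lemma tpt_nonneg: "tpt a k \<ge> 0"
  using strict_mono_less_eq[OF strict_mono_tpt, of 0 k] by (simp add: tpt_def)

lemma tpt_pos: "k > 0 \<Longrightarrow> tpt a k > 0"
  using strict_mono_less[OF strict_mono_tpt, of 0 k] by (simp add: tpt_def)

lemma tpt_unbounded: "\<exists>n. t < tpt a n"
proof -
  have "eventually (\<lambda>n. a (Suc n) / a n < 1 / (\<bar>t\<bar> + 1)) sequentially"
    by (rule order_tendstoD(2)[OF ratio_lim]) (simp add: add_pos_nonneg)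
  then obtain n where "a (Suc n) / a n < 1 / (\<bar>t\<bar> + 1)"
    by (auto simp: eventually_sequentially)
  hence "\<bar>t\<bar> + 1 < a n / a (Suc n)"
    using pos[of n] pos[of "Suc n"] by (simp add: field_simps)
  thus ?thesis by (intro exI[of _ "Suc n"]) (simp add: tpt_Suc)
qed

lemma tpt_interval_exists: "t \<ge> 0 \<Longrightarrow> \<exists>m. tpt a m \<le> t \<and> t < tpt a (Suc m)"
proof -
  assume "t \<ge> 0"
  define n where "n = (LEAST n. t < tpt a n)"
  have n: "t < tpt a n"
    unfolding n_def using tpt_unbounded by (rule LeastI_ex)
  with \<open>t \<ge> 0\<close> obtain m where m: "n = Suc m"
    by (cases n) (auto simp: tpt_def)
  have "\<not> t < tpt a m"
    using not_less_Least[of m "\<lambda>n. t < tpt a n"] m by (simp add: n_def)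
  with n m show ?thesis by (auto simp: not_less)
qed

lemma tpt_interval_unique:
  assumes "tpt a m \<le> t" "t < tpt a (Suc m)" "tpt a m' \<le> t" "t < tpt a (Suc m')"
  shows "m = m'"
  using assms strict_mono_less_eq[OF strict_mono_tpt, of "Suc m" m']
    strict_mono_less_eq[OF strict_mono_tpt, of "Suc m'" m]
  by (metis linorder_neqE_nat not_less_eq_eq order.trans not_le)

lemma psf_Suc: "psf a (Suc j) t = psf a j t * (t / tpt a (Suc j))"
  using pos[of j] by (simp add: psf_def tpt_Suc field_simps)

lemma psf_0: "psf a j 0 = (if j = 0 then 1 else 0)"
  using pos[of 0] powser_zero[of a] by (simp add: psf_def psF_def)

lemma psf_Suc_le_iff: "t > 0 \<Longrightarrow> psf a (Suc j) t \<le> psf a j t \<longleftrightarrow> t \<le> tpt a (Suc j)"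
  using psf_pos[of t j] tpt_pos[of "Suc j"] by (simp add: psf_Suc pos_divide_le_eq mult_le_cancel_left_pos)

lemma psf_le_Suc_iff: "t > 0 \<Longrightarrow> psf a j t \<le> psf a (Suc j) t \<longleftrightarrow> tpt a (Suc j) \<le> t"
  using psf_pos[of t j] tpt_pos[of "Suc j"] by (simp add: psf_Suc pos_le_divide_eq mult_le_cancel_left_pos)

lemma is_mode_psf_iff:
  assumes "t \<ge> 0"
  shows "is_mode (\<lambda>j. psf a j t) k \<longleftrightarrow> tpt a k \<le> t \<and> t \<le> tpt a (Suc k)"
proof (cases "t = 0")
  case True
  have "is_mode (\<lambda>j. psf a j t) k \<longleftrightarrow> k = 0"
    using True by (auto simp: is_mode_def psf_0 dest: spec[of _ 0])
  moreover have "tpt a k \<le> t \<and> t \<le> tpt a (Suc k) \<longleftrightarrow> k = 0"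
    using True tpt_pos[of k] tpt_nonneg[of "Suc k"] by (auto simp: tpt_def)
  ultimately show ?thesis by simp
next
  case False
  with assms have t: "t > 0" by simp
  show ?thesis
  proof
    assume mode: "is_mode (\<lambda>j. psf a j t) k"
    have "t \<le> tpt a (Suc k)"
      using mode psf_Suc_le_iff[OF t, of k] by (simp add: is_mode_def)
    moreover have "tpt a k \<le> t"
      using mode t psf_le_Suc_iff[OF t, of "k - 1"] by (cases k) (auto simp: is_mode_def tpt_def)
    ultimately show "tpt a k \<le> t \<and> t \<le> tpt a (Suc k)" by simp
  next
    assume k: "tpt a k \<le> t \<and> t \<le> tpt a (Suc k)"
    show "is_mode (\<lambda>j. psf a j t) k"
    proof (rule is_mode_if_unimodal)
      fix j assume "j < k"
      then have "tpt a (Suc j) \<le> tpt a k" by (simp add: strict_mono_less_eq[OF strict_mono_tpt])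
      with k show "psf a j t \<le> psf a (Suc j) t" by (simp add: psf_le_Suc_iff[OF t])
    next
      fix j assume "k \<le> j"
      then have "tpt a (Suc k) \<le> tpt a (Suc j)" by (simp add: strict_mono_less_eq[OF strict_mono_tpt])
      with k show "psf a (Suc j) t \<le> psf a j t" by (simp add: psf_Suc_le_iff[OF t])
    qed
  qed
qed

lemma leading_mode_condition_psf_iff:
  assumes "t \<ge> 0"
  shows "((if m = 0 then 0 else psf a (m - 1) t) \<le> psf a m t \<and> psf a m t > psf a (m + 1) t)
    \<longleftrightarrow> tpt a m \<le> t \<and> t < tpt a (Suc m)"
proof (cases "t = 0")
  case True
  then show ?thesis
    using tpt_pos[of m] tpt_pos[of "Suc m"] by (cases m) (auto simp: psf_0 tpt_def)
next
  case False
  with assms have t: "t > 0" by simp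
  have "psf a m t > psf a (m + 1) t \<longleftrightarrow> t < tpt a (Suc m)"
    using psf_le_Suc_iff[OF t, of m] by (simp add: not_le[symmetric])
  moreover have "(if m = 0 then 0 else psf a (m - 1) t) \<le> psf a m t \<longleftrightarrow> tpt a m \<le> t"
    using t psf_nonneg[of t 0] psf_le_Suc_iff[OF t, of "m - 1"] by (cases m) (auto simp: tpt_def)
  ultimately show ?thesis by simp
qed

lemma leading_mode_psf:
  assumes "t \<ge> 0" "tpt a m \<le> t" "t < tpt a (Suc m)"
  shows "leading_mode (\<lambda>j. psf a j t) = m"
  unfolding leading_mode_def
proof (rule the_equality)
  show "(if m = 0 then 0 else psf a (m - 1) t) \<le> psf a m t \<and> psf a m t > psf a (m + 1) t"
    using leading_mode_condition_psf_iff[OF assms(1)] assms(2,3) by blast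
next
  fix m' assume "(if m' = 0 then 0 else psf a (m' - 1) t) \<le> psf a m' t \<and> psf a m' t > psf a (m' + 1) t"
  then show "m' = m"
    using leading_mode_condition_psf_iff[OF assms(1)] tpt_interval_unique[OF assms(2,3)] by blast
qed

lemma mode_at_ell_iff_tpt_le_ell:
  "(\<forall>k. is_mode (\<lambda>j. psf a j (ell a k)) k) \<longleftrightarrow> (\<forall>k\<ge>1. tpt a k \<le> ell a k \<and> ell a k \<le> tpt a (k + 1))"
proof -
  have "ell a 0 = 0" using ell_unique[of 0 0] psmean_0 by simp
  moreover have "tpt a 0 = 0" by (simp add: tpt_def)
  ultimately have "tpt a 0 \<le> ell a 0 \<and> ell a 0 \<le> tpt a (0 + 1)" using tpt_nonneg by simp
  then show ?thesis
    using is_mode_psf_iff[OF ell_nonneg] by (metis Suc_eq_plus1 less_one not_le)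
qed

lemma tpt_le_ell_iff_psmean_tpt_bounds:
  "(\<forall>k\<ge>1. tpt a k \<le> ell a k \<and> ell a k \<le> tpt a (k + 1))
     \<longleftrightarrow> (\<forall>k\<ge>1. real k - 1 \<le> psmean a (tpt a k) \<and> psmean a (tpt a k) \<le> real k)"
    (is "(\<forall>k\<ge>1. ?ell_between k) \<longleftrightarrow> (\<forall>k\<ge>1. ?mean_between k)")
proof -
  have upper: "tpt a k \<le> ell a k \<longleftrightarrow> psmean a (tpt a k) \<le> real k" for k
    using psmean_le_iff_le_ell[OF tpt_nonneg] by simp
  have lower: "ell a k \<le> tpt a (k + 1) \<longleftrightarrow> real k \<le> psmean a (tpt a (k + 1))" for k
    using ell_le_iff_le_psmean[OF tpt_nonneg] by simp
  show ?thesis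
  proof (intro iffI allI impI conjI)
    fix k :: nat assume ell_between: "\<forall>k\<ge>1. ?ell_between k" and "k \<ge> 1"
    then show "psmean a (tpt a k) \<le> real k" using upper by blast
    from \<open>k \<ge> 1\<close> obtain j where k: "k = j + 1" by (metis le_add_diff_inverse2)
    show "real k - 1 \<le> psmean a (tpt a k)"
    proof (cases "j = 0")
      case True
      then show ?thesis using k psmean_nonneg[OF tpt_nonneg] by simp
    next
      case False
      then show ?thesis using k ell_between lower[of j] by simp
    qed
  next
    fix k :: nat assume mean_between: "\<forall>k\<ge>1. ?mean_between k" and "k \<ge> 1"
    then show "tpt a k \<le> ell a k" using upper by blast
    show "ell a k \<le> tpt a (k + 1)" using mean_between[rule_format, of "k + 1"] lower by simp
  qed
qed

lemma leading_mode_close_if_psmean_tpt_bounds: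
  assumes bounds: "\<forall>k\<ge>1. real k - 1 \<le> psmean a (tpt a k) \<and> psmean a (tpt a k) \<le> real k"
    and "t \<ge> 0"
  shows "\<bar>psmean a t - real (leading_mode (\<lambda>j. psf a j t))\<bar> \<le> 1"
proof -
  obtain m where m: "tpt a m \<le> t" "t < tpt a (Suc m)"
    using tpt_interval_exists[OF \<open>t \<ge> 0\<close>] by blast
  have "psmean a t \<le> psmean a (tpt a (Suc m))"
    using m \<open>t \<ge> 0\<close> tpt_nonneg psmean_le_psmean_iff by simp
  also have "\<dots> \<le> real m + 1"
    using bounds[rule_format, of "Suc m"] by simp
  finally have "psmean a t \<le> real m + 1" .
  moreover have "real m - 1 \<le> psmean a t"
  proof (cases "m = 0")
    case True
    then show ?thesis using psmean_nonneg[OF \<open>t \<ge> 0\<close>] by simp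
  next
    case False
    then have "real m - 1 \<le> psmean a (tpt a m)" using bounds by simp
    also have "\<dots> \<le> psmean a t" using m \<open>t \<ge> 0\<close> tpt_nonneg psmean_le_psmean_iff by simp
    finally show ?thesis .
  qed
  ultimately show ?thesis
    using leading_mode_psf[OF \<open>t \<ge> 0\<close> m] by simp
qed

lemma psmean_tpt_bounds_if_leading_mode_close:
  assumes near: "\<forall>t\<ge>0. \<bar>psmean a t - real (leading_mode (\<lambda>j. psf a j t))\<bar> \<le> 1"
    and "k \<ge> 1"
  shows "real k - 1 \<le> psmean a (tpt a k) \<and> psmean a (tpt a k) \<le> real k"
proof
  have near_interval: "\<bar>psmean a t - real m\<bar> \<le> 1" if "tpt a m \<le> t" "t < tpt a (Suc m)" for t m
    using near leading_mode_psf[OF _ that] tpt_nonneg[of m] that(1) by force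
  show "real k - 1 \<le> psmean a (tpt a k)"
    using near_interval[of k "tpt a k"] strict_mono_tpt by (simp add: strict_mono_def)
  show "psmean a (tpt a k) \<le> real k"
  proof (rule ccontr)
    assume "\<not> psmean a (tpt a k) \<le> real k"
    then have "ell a k < tpt a k" using psmean_le_iff_le_ell[OF tpt_nonneg] by simp
    from \<open>k \<ge> 1\<close> obtain p where k: "k = Suc p" by (metis Suc_le_D One_nat_def)
    \<comment> \<open>a point of [tpt (k - 1), tpt k) beyond ell k has mean above k, though its leading mode is k - 1\<close>
    define s where "s = max (tpt a p) ((ell a k + tpt a k) / 2)"
    have s: "tpt a p \<le> s" "s < tpt a (Suc p)" "ell a k < s"
      using \<open>ell a k < tpt a k\<close> strict_mono_tpt k by (auto simp: s_def strict_mono_def less_max_iff_disj)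
    then have "real k < psmean a s"
      using psmean_le_iff_le_ell[of s k] ell_nonneg[of k] by simp
    with near_interval[OF s(1,2)] k show False by simp
  qed
qed

end

theorem proposition1:
  fixes a :: "nat \<Rightarrow> real"
  assumes pos: "\<And>k. a k > 0"
    and ratio_dec: "\<And>k. a (Suc (Suc k)) / a (Suc k) < a (Suc k) / a k"
    and ratio_lim: "(\<lambda>k. a (Suc k) / a k) \<longlonglongrightarrow> 0"
  defines "C \<equiv> (\<forall>t\<ge>0. \<forall>k::nat. psmean a t = real k \<longrightarrow> is_mode (\<lambda>j. psf a j t) k)"
  shows "(cross_modal a \<longleftrightarrow> C)
    \<and> (C \<longleftrightarrow> (\<forall>k\<ge>1. tpt a k \<le> ell a k \<and> ell a k \<le> tpt a (k + 1)))
    \<and> (C \<longleftrightarrow> (\<forall>k\<ge>1. real k - 1 \<le> psmean a (tpt a k) \<and> psmean a (tpt a k) \<le> real k))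
    \<and> (C \<longleftrightarrow> (SUP t\<in>{0..}. ereal \<bar>psmean a t - real (leading_mode (\<lambda>j. psf a j t))\<bar>) \<le> 1)"
proof -
  interpret ratio_decreasing_family a
    by unfold_locales (fact pos ratio_dec ratio_lim)+
  have C: "C \<longleftrightarrow> (\<forall>k. is_mode (\<lambda>j. psf a j (ell a k)) k)"
    unfolding C_def by (rule integer_mean_is_mode_iff_mode_at_ell)
  have "(SUP t\<in>{0..}. ereal \<bar>psmean a t - real (leading_mode (\<lambda>j. psf a j t))\<bar>) \<le> 1
      \<longleftrightarrow> (\<forall>t\<ge>0. \<bar>psmean a t - real (leading_mode (\<lambda>j. psf a j t))\<bar> \<le> 1)"
    by (simp add: SUP_le_iff Ball_def)
  also have "\<dots> \<longleftrightarrow> (\<forall>k\<ge>1. real k - 1 \<le> psmean a (tpt a k) \<and> psmean a (tpt a k) \<le> real k)"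
    using leading_mode_close_if_psmean_tpt_bounds psmean_tpt_bounds_if_leading_mode_close by blast
  finally show ?thesis
    using C cross_modal_iff_mode_at_ell mode_at_ell_iff_tpt_le_ell tpt_le_ell_iff_psmean_tpt_bounds
    by blast
qed

end
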